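(* $\mathbf{TP}_n$ is closed under necessitation for $[\varnothing]$: if $\phi\in\mathbf{TP}_n$, then $[\varnothing]\phi\in\mathbf{TP}_n$.
   Context: $N$ is a finite set of players. Formulas of $\mathcal L^+$: $\phi::=1\mid p\mid\phi\to\phi\mid\neg\phi\mid[C]\phi\mid[\mathcal O]\phi$ ($p$ in a countably infinite set $\mathsf{Prop}$, $C\subseteq N$); abbreviations $0=\neg1$, $\phi\oplus\psi=\neg\phi\to\psi$, $\phi\odot\psi=\neg(\phi\to\neg\psi)$, $\phi\wedge\psi=\phi\odot(\phi\to\psi)$, $\phi\leftrightarrow\psi=(\phi\to\psi)\odot(\psi\to\phi)$. $\mathbf{TP}_n$ is the smallest set of $\mathcal L^+$-formulas that contains an axiomatic base of $(n+1)$-valued Łukasiewicz logic, the axioms $[C](p\odot p)\leftrightarrow[C]p\odot[C]p$, $[C](p\oplus p)\leftrightarrow[C]p\oplus[C]p$, $\neg[C]0$ (all $C\subseteq N$), $([C]p\wedge[C']q)\to[C\cup C'](p\wedge q)$ (for $C\cap C'=\varnothing$), $[\varnothing]p\to\neg[N]\neg p$, $[\mathcal O]1$, $[\mathcal O]p\leftrightarrow[\varnothing]p$, $[\varnothing](p\to q)\to([\varnothing]p\to[\varnothing]q)$, and is closed under Modus Ponens, uniform substitution and Monotonicity for each $[C]$ (from $\phi\to\psi$ infer $[C]\phi\to[C]\psi$). *)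

theory Defs
  imports Complex_Main
begin

datatype 'a fm =
    Top
  | Var nat
  | Imp "'a fm" "'a fm"
  | Neg "'a fm"
  | Box "'a set" "'a fm"
  | OBox "'a fm"

fun wf :: "'a set \<Rightarrow> 'a fm \<Rightarrow> bool" where
  "wf N Top = True"
| "wf N (Var p) = True"
| "wf N (Imp a b) = (wf N a \<and> wf N b)"
| "wf N (Neg a) = wf N a"
| "wf N (Box C a) = (C \<subseteq> N \<and> wf N a)"
| "wf N (OBox a) = wf N a"

definition Zero :: "'a fm" where "Zero = Neg Top"
definition Oplus :: "'a fm \<Rightarrow> 'a fm \<Rightarrow> 'a fm" where "Oplus a b = Imp (Neg a) b"
definition Odot :: "'a fm \<Rightarrow> 'a fm \<Rightarrow> 'a fm" where "Odot a b = Neg (Imp a (Neg b))"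
definition Wedge :: "'a fm \<Rightarrow> 'a fm \<Rightarrow> 'a fm" where "Wedge a b = Odot a (Imp a b)"
definition Iff :: "'a fm \<Rightarrow> 'a fm \<Rightarrow> 'a fm" where "Iff a b = Odot (Imp a b) (Imp b a)"

fun subst :: "(nat \<Rightarrow> 'a fm) \<Rightarrow> 'a fm \<Rightarrow> 'a fm" where
  "subst s Top = Top"
| "subst s (Var p) = s p"
| "subst s (Imp a b) = Imp (subst s a) (subst s b)"
| "subst s (Neg a) = Neg (subst s a)"
| "subst s (Box C a) = Box C (subst s a)"
| "subst s (OBox a) = OBox (subst s a)"

fun pure :: "'a fm \<Rightarrow> bool" where
  "pure Top = True"
| "pure (Var p) = True"
| "pure (Imp a b) = (pure a \<and> pure b)"
| "pure (Neg a) = pure a"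
| "pure (Box C a) = False"
| "pure (OBox a) = False"

fun ev :: "(nat \<Rightarrow> real) \<Rightarrow> 'a fm \<Rightarrow> real" where
  "ev v Top = 1"
| "ev v (Var p) = v p"
| "ev v (Imp a b) = min 1 (1 - ev v a + ev v b)"
| "ev v (Neg a) = 1 - ev v a"
| "ev v (Box C a) = 0"
| "ev v (OBox a) = 0"

definition luk_taut :: "nat \<Rightarrow> 'a fm \<Rightarrow> bool" where
  "luk_taut n \<phi> \<longleftrightarrow> pure \<phi> \<and>
     (\<forall>v. (\<forall>p. \<exists>k\<le>n. v p = real k / real n) \<longrightarrow> ev v \<phi> = 1)"

abbreviation "pv \<equiv> Var 0"
abbreviation "qv \<equiv> Var 1"

inductive_set TP :: "nat \<Rightarrow> 'a set \<Rightarrow> 'a fm set" for n :: nat and N :: "'a set" where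
  luk: "luk_taut n \<phi> \<Longrightarrow> \<phi> \<in> TP n N"
| ax_odot: "C \<subseteq> N \<Longrightarrow> Iff (Box C (Odot pv pv)) (Odot (Box C pv) (Box C pv)) \<in> TP n N"
| ax_oplus: "C \<subseteq> N \<Longrightarrow> Iff (Box C (Oplus pv pv)) (Oplus (Box C pv) (Box C pv)) \<in> TP n N"
| ax_nzero: "C \<subseteq> N \<Longrightarrow> Neg (Box C Zero) \<in> TP n N"
| ax_sup: "C \<subseteq> N \<Longrightarrow> C' \<subseteq> N \<Longrightarrow> C \<inter> C' = {} \<Longrightarrow>
     Imp (Wedge (Box C pv) (Box C' qv)) (Box (C \<union> C') (Wedge pv qv)) \<in> TP n N"
| ax_cons: "Imp (Box {} pv) (Neg (Box N (Neg pv))) \<in> TP n N"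
| ax_otop: "OBox Top \<in> TP n N"
| ax_oeq: "Iff (OBox pv) (Box {} pv) \<in> TP n N"
| ax_K: "Imp (Box {} (Imp pv qv)) (Imp (Box {} pv) (Box {} qv)) \<in> TP n N"
| mp: "\<phi> \<in> TP n N \<Longrightarrow> Imp \<phi> \<psi> \<in> TP n N \<Longrightarrow> \<psi> \<in> TP n N"
| usubst: "\<phi> \<in> TP n N \<Longrightarrow> (\<forall>p. wf N (s p)) \<Longrightarrow> subst s \<phi> \<in> TP n N"
| mono: "Imp \<phi> \<psi> \<in> TP n N \<Longrightarrow> C \<subseteq> N \<Longrightarrow> Imp (Box C \<phi>) (Box C \<psi>) \<in> TP n N"

end

theory Submission
  imports Defs
begin

text \<open>Necessitation for [\<emptyset>] is derivable from the axioms: substituting 1 into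
  [O]p \<leftrightarrow> [\<emptyset>]p and using [O]1 gives [\<emptyset>]1; from \<phi> the tautology
  p \<rightarrow> (1 \<rightarrow> p) yields 1 \<rightarrow> \<phi>, which monotonicity of [\<emptyset>] turns into
  [\<emptyset>]1 \<rightarrow> [\<emptyset>]\<phi>.\<close>

lemma wf_subst: "wf N \<phi> \<Longrightarrow> (\<forall>p. wf N (s p)) \<Longrightarrow> wf N (subst s \<phi>)"
  by (induction \<phi>) auto

lemma wf_if_pure: "pure \<phi> \<Longrightarrow> wf N \<phi>"
  by (induction \<phi>) auto

lemma wf_if_TP: "\<phi> \<in> TP n N \<Longrightarrow> wf N \<phi>"
  by (induction rule: TP.induct)
     (auto simp: luk_taut_def wf_if_pure wf_subst Iff_def Odot_def Oplus_def Zero_def Wedge_def)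

lemma TP_subst_pq:
  assumes "\<phi> \<in> TP n N" "wf N a" "wf N b"
  shows "subst (\<lambda>k. if k = 0 then a else b) \<phi> \<in> TP n N"
  using assms by (intro TP.usubst) auto

lemma luk_value_bounds:
  assumes "\<forall>p. \<exists>k\<le>n. v p = real k / real n"
  shows "0 \<le> v p" "v p \<le> 1"
proof -
  obtain k where "k \<le> n" "v p = real k / real n" using assms by blast
  then show "0 \<le> v p" "v p \<le> 1" by (auto simp: divide_le_eq_1)
qed

lemma luk_taut_Odot_elim: "luk_taut n (Imp (Odot pv qv) pv)"
  unfolding luk_taut_def Odot_def
proof (intro conjI allI impI)
  fix v :: "nat \<Rightarrow> real"
  assume "\<forall>p. \<exists>k\<le>n. v p = real k / real n"
  from luk_value_bounds[OF this, of 0] luk_value_bounds[OF this, of 1]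
  show "ev v (Imp (Neg (Imp pv (Neg qv))) pv :: 'a fm) = 1" by simp
qed simp

lemma luk_taut_Imp_Top: "luk_taut n (Imp pv (Imp Top pv))"
  unfolding luk_taut_def
proof (intro conjI allI impI)
  fix v :: "nat \<Rightarrow> real"
  assume "\<forall>p. \<exists>k\<le>n. v p = real k / real n"
  from luk_value_bounds[OF this, of 0]
  show "ev v (Imp pv (Imp Top pv) :: 'a fm) = 1" by simp
qed simp

lemma TP_Iff_imp:
  assumes "Iff a b \<in> TP n N"
  shows "Imp a b \<in> TP n N"
proof -
  have "wf N a" "wf N b" using wf_if_TP[OF assms] by (auto simp: Iff_def Odot_def)
  then have "subst (\<lambda>k. if k = 0 then Imp a b else Imp b a) (Imp (Odot pv qv) pv) \<in> TP n N"
    by (intro TP_subst_pq TP.luk luk_taut_Odot_elim) auto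
  then have "Imp (Iff a b) (Imp a b) \<in> TP n N" by (simp add: Iff_def Odot_def)
  with assms show ?thesis by (rule TP.mp)
qed

lemma TP_Box_empty_Top: "Box {} Top \<in> TP n N"
proof -
  have "subst (\<lambda>k. Top) (Iff (OBox pv) (Box {} pv)) \<in> TP n N"
    by (intro TP.usubst TP.ax_oeq) simp
  then have "Imp (OBox Top) (Box {} Top) \<in> TP n N"
    by (intro TP_Iff_imp) (simp add: Iff_def Odot_def)
  with TP.ax_otop show ?thesis by (rule TP.mp)
qed

lemma TP_Imp_Top:
  assumes "\<phi> \<in> TP n N"
  shows "Imp Top \<phi> \<in> TP n N"
proof -
  have "subst (\<lambda>k. if k = 0 then \<phi> else Top) (Imp pv (Imp Top pv)) \<in> TP n N"
    using wf_if_TP[OF assms] by (intro TP_subst_pq TP.luk luk_taut_Imp_Top) auto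
  then have "Imp \<phi> (Imp Top \<phi>) \<in> TP n N" by simp
  with assms show ?thesis by (rule TP.mp)
qed

theorem mainTheorem16:
  fixes n :: nat and N :: "'a set" and \<phi> :: "'a fm"
  assumes "finite N" and "n \<ge> 1"
  assumes "\<phi> \<in> TP n N"
  shows "Box {} \<phi> \<in> TP n N"
proof -
  have "Imp (Box {} Top) (Box {} \<phi>) \<in> TP n N"
    using TP_Imp_Top[OF assms(3)] by (rule TP.mono) simp
  with TP_Box_empty_Top show ?thesis by (rule TP.mp)
qed

end
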